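(* Let $\Sigma$ be a ranked alphabet, $B$ a strong bimonoid and $\mathcal{A}$ a bottom-up deterministic $(\Sigma,B)$-weighted tree automaton. Then $[\![\mathcal{A}]\!]^{\mathrm{init}}=[\![\mathcal{A}]\!]^{\mathrm{run}}$.
   Context: A ranked alphabet is a finite nonempty set $\Sigma$ with a rank map $\mathrm{rk}:\Sigma\to\mathbb{N}$; $\Sigma^{(k)}=\{\sigma\mid \mathrm{rk}(\sigma)=k\}$, and it is assumed that $\Sigma^{(0)}\neq\emptyset$. $T_\Sigma$ is the set of $\Sigma$-trees: the smallest set containing $\Sigma^{(0)}$ and containing $\sigma(\xi_1,\dots,\xi_k)$ whenever $k\ge 1$, $\sigma\in\Sigma^{(k)}$, $\xi_1,\dots,\xi_k\in T_\Sigma$ (for $k=0$ we write $\sigma$ for $\sigma()$). Positions: $\mathrm{pos}(\alpha)=\{\varepsilon\}$ for $\alpha\in\Sigma^{(0)}$, $\mathrm{pos}(\sigma(\xi_1,\dots,\xi_k))=\{\varepsilon\}\cup\{iv\mid i\in[k], v\in\mathrm{pos}(\xi_i)\}$. A strong bimonoid $(B,\oplus,\otimes,\mathbb{0},\mathbb{1})$ consists of a commutative monoid $(B,\oplus,\mathbb{0})$ and a (not necessarily commutative) monoid $(B,\otimes,\mathbb{1})$ with $\mathbb{0}\neq\mathbb{1}$ and $b\otimes\mathbb{0}=\mathbb{0}\otimes b=\mathbb{0}$ for all $b$; no distributivity is assumed. $\bigotimes_{i=1}^k a_i=a_1\otimes\cdots\otimes a_k$ in this order ($\mathbb{1}$ if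 $k=0$), and $\bigoplus$ over a finite index set is the iterated sum ($\mathbb{0}$ if empty). A $(\Sigma,B)$-weighted tree automaton (wta) is $\mathcal{A}=(Q,\delta,F)$ with $Q$ a finite nonempty set, $\delta=(\delta_k)_{k\in\mathbb{N}}$ with $\delta_k:Q^k\times\Sigma^{(k)}\times Q\to B$ (written $\delta_k(q_1\dots q_k,\sigma,q)$), and $F:Q\to B$. The vector algebra of $\mathcal{A}$ is the $\Sigma$-algebra $(B^Q,\delta_{\mathcal{A}})$ with $\delta_{\mathcal{A}}(\sigma)(v_1,\dots,v_k)_q=\bigoplus_{q_1,\dots,q_k\in Q}\big(\bigotimes_{i=1}^k (v_i)_{q_i}\big)\otimes\delta_k(q_1\dots q_k,\sigma,q)$. Let $h_{\mathrm{V}(\mathcal{A})}:T_\Sigma\to B^Q$ be defined by $h_{\mathrm{V}(\mathcal{A})}(\sigma(\xi_1,\dots,\xi_k))=\delta_{\mathcal{A}}(\sigma)(h_{\mathrm{V}(\mathcal{A})}(\xi_1),\dots,h_{\mathrm{V}(\mathcal{A})}(\xi_k))$. The initial algebra semantics is $[\![\mathcal{A}]\!]^{\mathrm{init}}(\xi)=\bigoplus_{q\in Q}h_{\mathrm{V}(\mathcal{A})}(\xi)_q\otimes F_q$. A run of $\mathcal{A}$ on $\xi$ is a map $\rho:\mathrm{pos}(\xi)\to Q$; $R_{\mathcal{A}}(\xi)$ is the set of runs on $\xi$; $\rho|_i$ is the run on $\xi_i$ given by $\rho|_i(w)=\rho(iw)$. For $\xi=\sigma(\xi_1,\dots,\xi_k)$,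 $\mathrm{wt}_{\mathcal{A}}(\rho)=\big(\bigotimes_{i=1}^k\mathrm{wt}_{\mathcal{A}}(\rho|_i)\big)\otimes\delta_k(\rho(1)\dots\rho(k),\sigma,\rho(\varepsilon))$. The run semantics is $[\![\mathcal{A}]\!]^{\mathrm{run}}(\xi)=\bigoplus_{\rho\in R_{\mathcal{A}}(\xi)}\mathrm{wt}_{\mathcal{A}}(\rho)\otimes F_{\rho(\varepsilon)}$. $\mathcal{A}$ is bottom-up deterministic if for all $k$, $\sigma\in\Sigma^{(k)}$, $q_1,\dots,q_k\in Q$ there is at most one $q\in Q$ with $\delta_k(q_1\dots q_k,\sigma,q)\neq\mathbb{0}$. *)

theory Defs
  imports "HOL-Library.FuncSet"
begin

text \<open>Trees over an alphabet of type 'f; the ranked alphabet is the finite type 'f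
  together with a rank map rk. Children are indexed 0,...,k-1 (instead of 1..k).\<close>

datatype 'f tree = Node 'f "'f tree list"

lemma size_nth_less: "i < length ts \<Longrightarrow> size (ts ! i) < Suc (size_list size ts)"
  using size_list_estimation'[of "ts ! i" ts "size (ts ! i)" size] nth_mem[of i ts] by simp

inductive wf_tree :: "('f \<Rightarrow> nat) \<Rightarrow> 'f tree \<Rightarrow> bool" for rk where
  "length ts = rk \<sigma> \<Longrightarrow> (\<forall>t\<in>set ts. wf_tree rk t) \<Longrightarrow> wf_tree rk (Node \<sigma> ts)"

function pos :: "'f tree \<Rightarrow> nat list set" where
  "pos (Node \<sigma> ts) = {[]} \<union> (\<Union>i\<in>{..<length ts}. (\<lambda>v. i # v) ` pos (ts ! i))"
  by pat_completeness auto
termination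
  by (relation "measure size") (auto intro: size_nth_less)

text \<open>Strong bimonoid: comm_monoid_add, monoid_mult, absorbing zero, zero \<noteq> one
  (no distributivity). Transition weights: delta qs \<sigma> q = \<delta>_k(q_1...q_k,\<sigma>,q).\<close>

definition vec_alg ::
  "('q::finite list \<Rightarrow> 'f \<Rightarrow> 'q \<Rightarrow> 'b::{comm_monoid_add,monoid_mult,mult_zero,zero_neq_one})
   \<Rightarrow> 'f \<Rightarrow> ('q \<Rightarrow> 'b) list \<Rightarrow> 'q \<Rightarrow> 'b" where
  "vec_alg \<delta> \<sigma> vs q =
     (\<Sum>qs\<in>{qs. length qs = length vs}. prod_list (map2 (\<lambda>v q'. v q') vs qs) * \<delta> qs \<sigma> q)"

fun hV ::
  "('q::finite list \<Rightarrow> 'f \<Rightarrow> 'q \<Rightarrow> 'b::{comm_monoid_add,monoid_mult,mult_zero,zero_neq_one})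
   \<Rightarrow> 'f tree \<Rightarrow> 'q \<Rightarrow> 'b" where
  "hV \<delta> (Node \<sigma> ts) = vec_alg \<delta> \<sigma> (map (hV \<delta>) ts)"

definition sem_init ::
  "('q::finite list \<Rightarrow> 'f \<Rightarrow> 'q \<Rightarrow> 'b::{comm_monoid_add,monoid_mult,mult_zero,zero_neq_one})
   \<Rightarrow> ('q \<Rightarrow> 'b) \<Rightarrow> 'f tree \<Rightarrow> 'b" where
  "sem_init \<delta> F \<xi> = (\<Sum>q\<in>UNIV. hV \<delta> \<xi> q * F q)"

definition runs :: "'f tree \<Rightarrow> (nat list \<Rightarrow> 'q) set" where
  "runs \<xi> = PiE (pos \<xi>) (\<lambda>_. UNIV)"

function wt ::
  "('q::finite list \<Rightarrow> 'f \<Rightarrow> 'q \<Rightarrow> 'b::{comm_monoid_add,monoid_mult,mult_zero,zero_neq_one})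
   \<Rightarrow> 'f tree \<Rightarrow> (nat list \<Rightarrow> 'q) \<Rightarrow> 'b" where
  "wt \<delta> (Node \<sigma> ts) \<rho> =
     prod_list (map (\<lambda>i. wt \<delta> (ts ! i) (\<lambda>w. \<rho> (i # w))) [0..<length ts])
     * \<delta> (map (\<lambda>i. \<rho> [i]) [0..<length ts]) \<sigma> (\<rho> [])"
  by pat_completeness auto
termination
  by (relation "measure (\<lambda>(_, t, _). size t)")
     (auto intro: size_nth_less)

definition sem_run ::
  "('q::finite list \<Rightarrow> 'f \<Rightarrow> 'q \<Rightarrow> 'b::{comm_monoid_add,monoid_mult,mult_zero,zero_neq_one})
   \<Rightarrow> ('q \<Rightarrow> 'b) \<Rightarrow> 'f tree \<Rightarrow> 'b" where
  "sem_run \<delta> F \<xi> = (\<Sum>\<rho>\<in>runs \<xi>. wt \<delta> \<xi> \<rho> * F (\<rho> []))"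

definition bu_det ::
  "('f \<Rightarrow> nat) \<Rightarrow> ('q list \<Rightarrow> 'f \<Rightarrow> 'q \<Rightarrow> 'b::zero) \<Rightarrow> bool" where
  "bu_det rk \<delta> \<longleftrightarrow> (\<forall>\<sigma> qs. length qs = rk \<sigma> \<longrightarrow>
      (\<forall>q q'. \<delta> qs \<sigma> q \<noteq> 0 \<and> \<delta> qs \<sigma> q' \<noteq> 0 \<longrightarrow> q = q'))"

end

theory Submission
  imports Defs
begin

text \<open>By induction on the tree, a bottom-up deterministic automaton has at most one run of
  nonzero weight, and h_V(\<xi>) is the point vector carrying the weight of that run at its root
  state, or zero if there is no such run. In the inductive step the children's vectors are point
  vectors, so the sum defining \<delta>_A collapses to the summand given by the children's root states,
  and determinism leaves a single target state. Every sum in either semantics thus has at most one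
  nonzero summand.\<close>

abbreviation subrun :: "(nat list \<Rightarrow> 'q) \<Rightarrow> nat \<Rightarrow> nat list \<Rightarrow> 'q" where
  "subrun \<rho> i \<equiv> (\<lambda>w. \<rho> (i # w))"

declare wt.simps [simp del] hV.simps [simp del]

lemma sum_eq_single:
  assumes "finite A" "a \<in> A" "\<forall>x\<in>A - {a}. f x = 0"
  shows "sum f A = f a"
  using sum.mono_neutral_left[of A "{a}" f] assms by simp

lemma prod_list_eq_0_if_0_mem:
  "(0::'b::{monoid_mult,mult_zero}) \<in> set xs \<Longrightarrow> prod_list xs = 0"
  by (induction xs) auto

lemma Nil_in_pos: "[] \<in> pos t"
  by (cases t) auto

lemma Cons_in_pos_Node: "i # w \<in> pos (Node \<sigma> ts) \<longleftrightarrow> i < length ts \<and> w \<in> pos (ts ! i)"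
  by auto

lemma finite_pos: "finite (pos t)"
  by (induction t rule: pos.induct) auto

lemma finite_runs: "finite (runs \<xi> :: (nat list \<Rightarrow> 'q::finite) set)"
  unfolding runs_def by (intro finite_PiE finite_pos) simp

lemma subrun_in_runs:
  assumes "\<rho> \<in> runs (Node \<sigma> ts)" "i < length ts"
  shows "subrun \<rho> i \<in> runs (ts ! i)"
  using assms unfolding runs_def PiE_def extensional_def
  by (auto simp del: pos.simps simp: Cons_in_pos_Node)

lemma runs_Node_eqI:
  assumes "\<rho> \<in> runs (Node \<sigma> ts)" "\<rho>' \<in> runs (Node \<sigma> ts)" "\<rho> [] = \<rho>' []"
    and "\<forall>i<length ts. subrun \<rho> i = subrun \<rho>' i"
  shows "\<rho> = \<rho>'"
proof
  fix w
  show "\<rho> w = \<rho>' w"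
  proof (cases w)
    case (Cons i v)
    show ?thesis
    proof (cases "i < length ts")
      case True
      with assms(4) have "subrun \<rho> i = subrun \<rho>' i" by blast
      then show ?thesis using Cons by (simp add: fun_eq_iff)
    next
      case False
      then have "w \<notin> pos (Node \<sigma> ts)" using Cons by (simp del: pos.simps add: Cons_in_pos_Node)
      then show ?thesis
        using PiE_arb[of \<rho> _ "\<lambda>_. UNIV"] PiE_arb[of \<rho>' _ "\<lambda>_. UNIV"] assms(1,2)
        unfolding runs_def by metis
    qed
  qed (use assms(3) in simp)
qed

lemma runs_Node_combine:
  assumes "\<forall>i<length ts. \<rho>s i \<in> runs (ts ! i)"
  obtains \<rho> where "\<rho> \<in> runs (Node \<sigma> ts)" "\<rho> [] = q" "\<forall>i<length ts. subrun \<rho> i = \<rho>s i"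
proof
  let ?\<rho> = "\<lambda>w. case w of [] \<Rightarrow> q
    | i # v \<Rightarrow> if i < length ts \<and> v \<in> pos (ts ! i) then \<rho>s i v else undefined"
  have ext: "\<rho>s i v = undefined" if "i < length ts" "v \<notin> pos (ts ! i)" for i v
    using assms that unfolding runs_def PiE_def extensional_def by blast
  show "?\<rho> \<in> runs (Node \<sigma> ts)"
    unfolding runs_def
  proof (rule PiE_I)
    fix w assume "w \<notin> pos (Node \<sigma> ts)"
    then show "?\<rho> w = undefined"
      by (cases w) (auto simp del: pos.simps simp: Nil_in_pos Cons_in_pos_Node)
  qed simp
  show "?\<rho> [] = q" by simp
  show "\<forall>i<length ts. subrun ?\<rho> i = \<rho>s i"
    using ext by auto
qed

lemma map2_apply_eq_map_nth:
  "length qs = length vs \<Longrightarrow> map2 (\<lambda>v q. v q) vs qs = map (\<lambda>i. (vs ! i) (qs ! i)) [0..<length vs]"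
  by (rule nth_equalityI) auto

lemma vec_alg_eq_if_point_args:
  fixes \<delta> :: "'q::finite list \<Rightarrow> 'f \<Rightarrow> 'q \<Rightarrow> 'b::{comm_monoid_add,monoid_mult,mult_zero,zero_neq_one}"
  assumes "length ps = length vs" and "\<forall>i<length vs. \<forall>q'. q' \<noteq> ps ! i \<longrightarrow> (vs ! i) q' = 0"
  shows "vec_alg \<delta> \<sigma> vs q = prod_list (map (\<lambda>i. (vs ! i) (ps ! i)) [0..<length vs]) * \<delta> ps \<sigma> q"
proof -
  have "(\<Sum>qs\<in>{qs. length qs = length vs}. prod_list (map2 (\<lambda>v q. v q) vs qs) * \<delta> qs \<sigma> q)
      = prod_list (map2 (\<lambda>v q. v q) vs ps) * \<delta> ps \<sigma> q"
  proof (rule sum_eq_single)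
    show "finite {qs :: 'q list. length qs = length vs}"
      using finite_lists_length_eq[OF finite_UNIV] by simp
    show "\<forall>qs\<in>{qs. length qs = length vs} - {ps}. prod_list (map2 (\<lambda>v q. v q) vs qs) * \<delta> qs \<sigma> q = 0"
    proof
      fix qs assume qs: "qs \<in> {qs. length qs = length vs} - {ps}"
      then obtain i where "i < length vs" "qs ! i \<noteq> ps ! i"
        using assms(1) nth_equalityI[of qs ps] by auto
      with assms(2) qs have "0 \<in> set (map (\<lambda>i. (vs ! i) (qs ! i)) [0..<length vs])"
        by (force simp: image_iff)
      with qs show "prod_list (map2 (\<lambda>v q. v q) vs qs) * \<delta> qs \<sigma> q = 0"
        by (simp add: map2_apply_eq_map_nth prod_list_eq_0_if_0_mem)
    qed
  qed (use assms(1) in simp)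
  then show ?thesis
    using assms(1) by (simp add: vec_alg_def map2_apply_eq_map_nth)
qed

lemma vec_alg_eq_0_if_0_arg:
  fixes \<delta> :: "'q::finite list \<Rightarrow> 'f \<Rightarrow> 'q \<Rightarrow> 'b::{comm_monoid_add,monoid_mult,mult_zero,zero_neq_one}"
  assumes "i < length vs" and "vs ! i = (\<lambda>_. 0)"
  shows "vec_alg \<delta> \<sigma> vs q = 0"
  unfolding vec_alg_def
proof (rule sum.neutral, rule ballI)
  fix qs :: "'q list" assume "qs \<in> {qs. length qs = length vs}"
  moreover have "0 \<in> set (map (\<lambda>i. (vs ! i) (qs ! i)) [0..<length vs])"
    using assms by (force simp: image_iff)
  ultimately show "prod_list (map2 (\<lambda>v q. v q) vs qs) * \<delta> qs \<sigma> q = 0"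
    by (simp add: map2_apply_eq_map_nth prod_list_eq_0_if_0_mem)
qed

lemma bu_detD:
  assumes "bu_det rk \<delta>" "length qs = rk \<sigma>" "\<delta> qs \<sigma> q \<noteq> 0" "\<delta> qs \<sigma> q' \<noteq> 0"
  shows "q = q'"
  using assms unfolding bu_det_def by blast

lemma wt_Node_nonzeroD:
  assumes "wt \<delta> (Node \<sigma> ts) \<rho> \<noteq> 0"
  shows "\<forall>i<length ts. wt \<delta> (ts ! i) (subrun \<rho> i) \<noteq> 0"
    and "\<delta> (map (\<lambda>i. \<rho> [i]) [0..<length ts]) \<sigma> (\<rho> []) \<noteq> 0"
  using assms prod_list_eq_0_if_0_mem[of "map (\<lambda>i. wt \<delta> (ts ! i) (subrun \<rho> i)) [0..<length ts]"]
  by (auto simp: wt.simps)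

lemma wt_nonzero_run_unique:
  assumes "bu_det rk \<delta>" and "wf_tree rk \<xi>"
    and "\<rho> \<in> runs \<xi>" "\<rho>' \<in> runs \<xi>" "wt \<delta> \<xi> \<rho> \<noteq> 0" "wt \<delta> \<xi> \<rho>' \<noteq> 0"
  shows "\<rho> = \<rho>'"
  using assms(2-)
proof (induction arbitrary: \<rho> \<rho>' rule: wf_tree.induct)
  case (1 ts \<sigma>)
  have subruns_eq: "\<forall>i<length ts. subrun \<rho> i = subrun \<rho>' i"
  proof (intro allI impI)
    fix i assume i: "i < length ts"
    then have "ts ! i \<in> set ts" by simp
    with "1.IH" i show "subrun \<rho> i = subrun \<rho>' i"
      using subrun_in_runs[OF "1.prems"(1) i] subrun_in_runs[OF "1.prems"(2) i]
        wt_Node_nonzeroD(1)[OF "1.prems"(3)] wt_Node_nonzeroD(1)[OF "1.prems"(4)]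
      by blast
  qed
  then have "map (\<lambda>i. \<rho> [i]) [0..<length ts] = map (\<lambda>i. \<rho>' [i]) [0..<length ts]"
    by (auto dest: fun_cong[of _ _ "[]"])
  then have "\<rho> [] = \<rho>' []"
    using bu_detD[OF assms(1)] wt_Node_nonzeroD(2)[OF "1.prems"(3)] wt_Node_nonzeroD(2)[OF "1.prems"(4)]
      "1.hyps"(1) by (metis length_map map_nth)
  with subruns_eq show ?case
    using runs_Node_eqI[OF "1.prems"(1,2)] by blast
qed

lemma hV_Node_eq_wt_fun_upd:
  assumes "\<forall>i<length ts. \<forall>q'. hV \<delta> (ts ! i) q' = (if q' = \<rho> [i] then wt \<delta> (ts ! i) (subrun \<rho> i) else 0)"
  shows "hV \<delta> (Node \<sigma> ts) q = wt \<delta> (Node \<sigma> ts) (\<rho>([] := q))"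
proof -
  let ?ps = "map (\<lambda>i. \<rho> [i]) [0..<length ts]"
  have "hV \<delta> (Node \<sigma> ts) q = vec_alg \<delta> \<sigma> (map (hV \<delta>) ts) q"
    by (simp add: hV.simps)
  also have "\<dots> = prod_list (map (\<lambda>i. (map (hV \<delta>) ts ! i) (?ps ! i)) [0..<length ts]) * \<delta> ?ps \<sigma> q"
    using assms vec_alg_eq_if_point_args[of ?ps "map (hV \<delta>) ts" \<delta> \<sigma> q] by simp
  also have "\<dots> = prod_list (map (\<lambda>i. wt \<delta> (ts ! i) (subrun \<rho> i)) [0..<length ts]) * \<delta> ?ps \<sigma> q"
    by (rule arg_cong[where f="\<lambda>p. prod_list p * _"], rule map_cong[OF refl]) (use assms in auto)
  also have "\<dots> = wt \<delta> (Node \<sigma> ts) (\<rho>([] := q))"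
    by (simp add: wt.simps)
  finally show ?thesis .
qed

lemma hV_eq_point_if_wt_nonzero:
  assumes "bu_det rk \<delta>" and "wf_tree rk \<xi>" and "\<rho> \<in> runs \<xi>" "wt \<delta> \<xi> \<rho> \<noteq> 0"
  shows "hV \<delta> \<xi> q = (if q = \<rho> [] then wt \<delta> \<xi> \<rho> else 0)"
  using assms(2-)
proof (induction arbitrary: \<rho> q rule: wf_tree.induct)
  case (1 ts \<sigma>)
  have "\<forall>i<length ts. \<forall>q'. hV \<delta> (ts ! i) q' = (if q' = \<rho> [i] then wt \<delta> (ts ! i) (subrun \<rho> i) else 0)"
  proof (intro allI impI)
    fix i q' assume i: "i < length ts"
    then have "ts ! i \<in> set ts" by simp
    with "1.IH" i show "hV \<delta> (ts ! i) q' = (if q' = \<rho> [i] then wt \<delta> (ts ! i) (subrun \<rho> i) else 0)"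
      using subrun_in_runs[OF "1.prems"(1) i] wt_Node_nonzeroD(1)[OF "1.prems"(2)] by simp
  qed
  then have hV_eq: "hV \<delta> (Node \<sigma> ts) q = wt \<delta> (Node \<sigma> ts) (\<rho>([] := q))"
    by (rule hV_Node_eq_wt_fun_upd)
  show ?case
  proof (cases "q = \<rho> []")
    case False
    have "\<delta> (map (\<lambda>i. \<rho> [i]) [0..<length ts]) \<sigma> q = 0"
    proof (rule ccontr)
      assume "\<delta> (map (\<lambda>i. \<rho> [i]) [0..<length ts]) \<sigma> q \<noteq> 0"
      with "1.hyps" have "q = \<rho> []"
        using bu_detD[OF assms(1) _ _ wt_Node_nonzeroD(2)[OF "1.prems"(2)]] by simp
      with False show False ..
    qed
    with False hV_eq show ?thesis by (simp add: wt.simps)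
  qed (use hV_eq in simp)
qed

lemma hV_eq_0_if_no_nonzero_run:
  assumes "bu_det rk \<delta>" and "wf_tree rk \<xi>" and "\<forall>\<rho>\<in>runs \<xi>. wt \<delta> \<xi> \<rho> = 0"
  shows "hV \<delta> \<xi> q = 0"
  using assms(2-)
proof (induction arbitrary: q rule: wf_tree.induct)
  case (1 ts \<sigma>)
  consider (dead_child) i where "i < length ts" "\<forall>\<rho>\<in>runs (ts ! i). wt \<delta> (ts ! i) \<rho> = 0"
    | (live_children) "\<forall>i<length ts. \<exists>\<rho>\<in>runs (ts ! i). wt \<delta> (ts ! i) \<rho> \<noteq> 0"
    by blast
  then show ?case
  proof cases
    case dead_child
    then have "map (hV \<delta>) ts ! i = (\<lambda>_. 0)"
      using "1.IH" by fastforce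
    with dead_child show ?thesis
      by (simp add: hV.simps vec_alg_eq_0_if_0_arg)
  next
    case live_children
    then obtain \<rho>s where \<rho>s: "\<forall>i<length ts. \<rho>s i \<in> runs (ts ! i) \<and> wt \<delta> (ts ! i) (\<rho>s i) \<noteq> 0"
      by metis
    then obtain \<rho> where \<rho>: "\<rho> \<in> runs (Node \<sigma> ts)" "\<rho> [] = q" "\<forall>i<length ts. subrun \<rho> i = \<rho>s i"
      using runs_Node_combine[of ts \<rho>s] by metis
    have "\<forall>i<length ts. \<forall>q'. hV \<delta> (ts ! i) q' = (if q' = \<rho> [i] then wt \<delta> (ts ! i) (subrun \<rho> i) else 0)"
    proof (intro allI impI)
      fix i q' assume i: "i < length ts"
      then have "wf_tree rk (ts ! i)"
        using "1.IH" nth_mem by blast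
      with i \<rho>s \<rho>(3) show "hV \<delta> (ts ! i) q' = (if q' = \<rho> [i] then wt \<delta> (ts ! i) (subrun \<rho> i) else 0)"
        using hV_eq_point_if_wt_nonzero[OF assms(1)] by (metis (no_types, lifting))
    qed
    then have "hV \<delta> (Node \<sigma> ts) q = wt \<delta> (Node \<sigma> ts) (\<rho>([] := q))"
      by (rule hV_Node_eq_wt_fun_upd)
    also have "\<rho>([] := q) = \<rho>"
      using \<rho>(2) by auto
    finally show ?thesis
      using "1.prems" \<rho>(1) by simp
  qed
qed

theorem theorem3p6:
  fixes rk :: "'f::finite \<Rightarrow> nat"
    and \<delta> :: "'q::finite list \<Rightarrow> 'f \<Rightarrow> 'q \<Rightarrow> 'b::{comm_monoid_add,monoid_mult,mult_zero,zero_neq_one}"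
    and F :: "'q \<Rightarrow> 'b"
  assumes "\<exists>\<sigma>. rk \<sigma> = 0"
    and "bu_det rk \<delta>"
    and "wf_tree rk \<xi>"
  shows "sem_init \<delta> F \<xi> = sem_run \<delta> F \<xi>"
  \<comment> \<open>A nullary symbol only makes the set of trees nonempty.\<close>
proof (cases "\<exists>\<rho>\<in>runs \<xi>. wt \<delta> \<xi> \<rho> \<noteq> 0")
  case True
  then obtain \<rho> where \<rho>: "\<rho> \<in> runs \<xi>" "wt \<delta> \<xi> \<rho> \<noteq> 0" by blast
  have "sem_init \<delta> F \<xi> = wt \<delta> \<xi> \<rho> * F (\<rho> [])"
    unfolding sem_init_def hV_eq_point_if_wt_nonzero[OF assms(2,3) \<rho>]
    by (subst sum_eq_single[of _ "\<rho> []"]) auto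
  also have "\<dots> = sem_run \<delta> F \<xi>"
    unfolding sem_run_def
    using wt_nonzero_run_unique[OF assms(2,3) _ \<rho>(1) _ \<rho>(2)]
    by (subst sum_eq_single[OF finite_runs \<rho>(1)]) fastforce+
  finally show ?thesis .
next
  case False
  then show ?thesis
    unfolding sem_init_def sem_run_def using hV_eq_0_if_no_nonzero_run[OF assms(2,3)] by simp
qed

end
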